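(* Let $n\ge 11$ and let $G$ be a connected tridegreed graph of order $n$ whose set of distinct vertex degrees is $\{d_1,d_2,d_3\}$ with $d_1<d_2<d_3=n-1$. Then there exists an integer $t$ lying between $\frac{3}{10}n$ and $\frac{4}{10}n$ such that $$cM_2(G)<cM_2(K_t+\overline{K}_{n-t}).$$
   Context: All graphs are finite and simple. For a graph $G$ and a vertex $u$, $d_u(G)$ denotes the degree of $u$ in $G$. The complementary second Zagreb index of $G$ is $cM_2(G)=\sum_{uv\in E(G)}\left|(d_u(G))^2-(d_v(G))^2\right|$. A graph is tridegreed if the set of distinct vertex degrees has exactly three elements. $K_m$ is the complete graph on $m$ vertices, $\overline{H}$ is the complement of $H$, and $H_1+H_2$ (the join) is the graph on the disjoint union $V(H_1)\cup V(H_2)$ with edge set $E(H_1)\cup E(H_2)\cup\{h_1h_2: h_1\in V(H_1),h_2\in V(H_2)\}$. *)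

theory Defs
  imports Main
begin

type_synonym 'a graph = "'a set \<times> ('a \<Rightarrow> 'a \<Rightarrow> bool)"

definition verts :: "'a graph \<Rightarrow> 'a set" where "verts G = fst G"
definition adj :: "'a graph \<Rightarrow> 'a \<Rightarrow> 'a \<Rightarrow> bool" where "adj G = snd G"

definition simple_graph :: "'a graph \<Rightarrow> bool" where
  "simple_graph G \<longleftrightarrow> finite (verts G) \<and>
     (\<forall>u v. adj G u v \<longrightarrow> u \<in> verts G \<and> v \<in> verts G \<and> u \<noteq> v \<and> adj G v u)"

definition connected_graph :: "'a graph \<Rightarrow> bool" where
  "connected_graph G \<longleftrightarrow> (\<forall>u\<in>verts G. \<forall>v\<in>verts G. (adj G)\<^sup>*\<^sup>* u v)"

definition deg :: "'a graph \<Rightarrow> 'a \<Rightarrow> nat" where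
  "deg G u = card {v \<in> verts G. adj G u v}"

definition degree_set :: "'a graph \<Rightarrow> nat set" where
  "degree_set G = deg G ` verts G"

definition tridegreed :: "'a graph \<Rightarrow> bool" where
  "tridegreed G \<longleftrightarrow> card (degree_set G) = 3"

text \<open>Each (unordered) edge is counted twice when summing over ordered adjacent pairs,
  so we halve that sum (the sum is even, the summand being symmetric).\<close>
definition cM2 :: "'a graph \<Rightarrow> int" where
  "cM2 G = (\<Sum>(u,v)\<in>{(u,v). u \<in> verts G \<and> v \<in> verts G \<and> adj G u v}.
              \<bar>(int (deg G u))^2 - (int (deg G v))^2\<bar>) div 2"

definition complete_graph :: "nat \<Rightarrow> nat graph" where
  "complete_graph m = ({0..<m}, \<lambda>i j. i < m \<and> j < m \<and> i \<noteq> j)"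

definition complement :: "'a graph \<Rightarrow> 'a graph" where
  "complement G = (verts G, \<lambda>u v. u \<in> verts G \<and> v \<in> verts G \<and> u \<noteq> v \<and> \<not> adj G u v)"

definition join :: "'a graph \<Rightarrow> 'b graph \<Rightarrow> ('a + 'b) graph" where
  "join G H = (Inl ` verts G \<union> Inr ` verts H,
     \<lambda>x y. case (x, y) of
        (Inl a, Inl b) \<Rightarrow> adj G a b
      | (Inr a, Inr b) \<Rightarrow> adj H a b
      | (Inl a, Inr b) \<Rightarrow> a \<in> verts G \<and> b \<in> verts H
      | (Inr a, Inl b) \<Rightarrow> a \<in> verts H \<and> b \<in> verts G)"

end

theory Submission
  imports Defs
begin

text \<open>
  Split the vertices into the degree classes \<open>V1, V2, V3\<close> of sizes \<open>n1, n2, s\<close>. Vertices of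
  degree \<open>n - 1\<close> are adjacent to all others and edges inside a class contribute nothing, so
  \<open>cM2 G = s n1 (d3\<^sup>2 - d1\<^sup>2) + s n2 (d3\<^sup>2 - d2\<^sup>2) + e (d2\<^sup>2 - d1\<^sup>2)\<close>, where \<open>e\<close> counts the edges
  between \<open>V1\<close> and \<open>V2\<close>, so that \<open>e \<le> n1 n2\<close> and \<open>e \<le> n1 (d1 - s)\<close>.
  The complete split graph (\<open>K\<^sub>t\<close> joined with \<open>n - t\<close> independent vertices) has
  \<open>cM2 = f t = t (n - t) ((n - 1)\<^sup>2 - t\<^sup>2)\<close>, and the value above is below \<open>f s\<close> if \<open>e \<le> s n2\<close>
  and below \<open>f (min d1 (s + n2))\<close> otherwise.
  Finally \<open>f (t + 1) - f t = -(n - 1 - t) Q t\<close> with \<open>Q\<close> a quadratic increasing in \<open>t\<close>, so \<open>f\<close>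
  increases while \<open>10 t < 3 n\<close> and decreases from \<open>\<lfloor>2 n / 5\<rfloor>\<close> on: its maximum over
  \<open>0..n\<close> is attained at some \<open>t\<close> with \<open>3 n \<le> 10 t \<le> 4 n\<close>.
\<close>

definition arcs :: "'a graph \<Rightarrow> 'a set \<Rightarrow> 'a set \<Rightarrow> ('a \<times> 'a) set" where
  "arcs G X Y = {(u, v). u \<in> X \<and> v \<in> Y \<and> adj G u v}"

definition degree_class :: "'a graph \<Rightarrow> nat \<Rightarrow> 'a set" where
  "degree_class G d = {v \<in> verts G. deg G v = d}"

lemma arcs_subset_Times: "arcs G X Y \<subseteq> X \<times> Y"
  unfolding arcs_def by auto

lemma finite_arcs: "finite X \<Longrightarrow> finite Y \<Longrightarrow> finite (arcs G X Y)"
  by (rule finite_subset[OF arcs_subset_Times finite_cartesian_product])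

lemma card_arcs_le: "finite X \<Longrightarrow> finite Y \<Longrightarrow> card (arcs G X Y) \<le> card X * card Y"
  using card_mono[OF finite_cartesian_product arcs_subset_Times] by (simp add: card_cartesian_product)

lemma card_arcs_commute:
  assumes "simple_graph G"
  shows "card (arcs G Y X) = card (arcs G X Y)"
proof -
  have "arcs G Y X = prod.swap ` arcs G X Y"
    using assms unfolding simple_graph_def arcs_def by auto
  then show ?thesis by (simp add: card_image)
qed

lemma sum_arcs_partition:
  assumes "finite V" and "finite I" and "k ` V \<subseteq> I"
  shows "(\<Sum>p\<in>arcs G V V. h p) =
    (\<Sum>i\<in>I. \<Sum>j\<in>I. \<Sum>p\<in>arcs G {u \<in> V. k u = i} {v \<in> V. k v = j}. h p)"
proof -
  have fibre: "{p. p \<in> arcs G V V \<and> (k (fst p), k (snd p)) = y} =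
      arcs G {u \<in> V. k u = fst y} {v \<in> V. k v = snd y}" for y
    unfolding arcs_def by (cases y) auto
  have "(\<Sum>p\<in>arcs G V V. h p) =
      (\<Sum>y\<in>I \<times> I. \<Sum>p\<in>{p. p \<in> arcs G V V \<and> (k (fst p), k (snd p)) = y}. h p)"
    using assms by (intro sum.group[symmetric] finite_arcs) (auto simp: arcs_def)
  then show ?thesis by (simp add: fibre sum.cartesian_product split_def)
qed

lemma cM2_eq_sum_arcs:
  "cM2 G = (\<Sum>(u, v)\<in>arcs G (verts G) (verts G). \<bar>(int (deg G u))^2 - (int (deg G v))^2\<bar>) div 2"
  unfolding cM2_def arcs_def ..

lemma cM2_by_degree_classes:
  assumes "finite (verts G)"
  shows "cM2 G = (\<Sum>i\<in>degree_set G. \<Sum>j\<in>degree_set G.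
    int (card (arcs G (degree_class G i) (degree_class G j))) * \<bar>(int i)^2 - (int j)^2\<bar>) div 2"
proof -
  have block: "(\<Sum>(u, v)\<in>arcs G (degree_class G i) (degree_class G j).
        \<bar>(int (deg G u))^2 - (int (deg G v))^2\<bar>) =
      int (card (arcs G (degree_class G i) (degree_class G j))) * \<bar>(int i)^2 - (int j)^2\<bar>" for i j
  proof -
    have "(\<Sum>(u, v)\<in>arcs G (degree_class G i) (degree_class G j).
        \<bar>(int (deg G u))^2 - (int (deg G v))^2\<bar>) =
      (\<Sum>p\<in>arcs G (degree_class G i) (degree_class G j). \<bar>(int i)^2 - (int j)^2\<bar>)"
      by (intro sum.cong refl) (auto simp: arcs_def degree_class_def)
    then show ?thesis by simp
  qed
  have "cM2 G = (\<Sum>(u, v)\<in>arcs G (verts G) (verts G). \<bar>(int (deg G u))^2 - (int (deg G v))^2\<bar>) div 2"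
    by (rule cM2_eq_sum_arcs)
  also have "\<dots> = (\<Sum>i\<in>degree_set G. \<Sum>j\<in>degree_set G.
      \<Sum>(u, v)\<in>arcs G (degree_class G i) (degree_class G j).
        \<bar>(int (deg G u))^2 - (int (deg G v))^2\<bar>) div 2"
    using assms unfolding degree_class_def degree_set_def by (subst sum_arcs_partition) auto
  finally show ?thesis by (simp only: block)
qed

definition complete_split_cM2 :: "nat \<Rightarrow> nat \<Rightarrow> int" where
  "complete_split_cM2 n t = int t * (int n - int t) * ((int n - 1)^2 - (int t)^2)"

definition complete_split_graph :: "nat \<Rightarrow> nat \<Rightarrow> (nat + nat) graph" where
  "complete_split_graph n t = join (complete_graph t) (complement (complete_graph (n - t)))"

lemma verts_complete_split_graph:
  "verts (complete_split_graph n t) = Inl ` {0..<t} \<union> Inr ` {0..<n - t}"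
  by (simp add: complete_split_graph_def join_def verts_def complete_graph_def complement_def)

lemma adj_complete_split_graph:
  "adj (complete_split_graph n t) u v \<longleftrightarrow> u \<in> verts (complete_split_graph n t) \<and>
     v \<in> verts (complete_split_graph n t) \<and> u \<noteq> v \<and> (isl u \<or> isl v)"
  by (cases u; cases v) (auto simp: complete_split_graph_def join_def adj_def verts_def
      complete_graph_def complement_def)

lemma deg_complete_split_graph:
  assumes "t \<le> n" and "u \<in> verts (complete_split_graph n t)"
  shows "deg (complete_split_graph n t) u = (if isl u then n - 1 else t)"
proof -
  let ?J = "complete_split_graph n t"
  have "card (verts ?J) = n"
    unfolding verts_complete_split_graph using assms(1)
    by (subst card_Un_disjoint) (auto simp: card_image)
  moreover have "{v \<in> verts ?J. adj ?J u v} = (if isl u then verts ?J - {u} else Inl ` {0..<t})"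
    using assms(2) by (auto simp: adj_complete_split_graph verts_complete_split_graph)
  ultimately show ?thesis using assms(2) by (simp add: deg_def card_image)
qed

lemma cM2_complete_split_graph:
  assumes "t \<le> n"
  shows "cM2 (complete_split_graph n t) = complete_split_cM2 n t"
proof -
  define J where "J = complete_split_graph n t"
  define L R :: "(nat + nat) set" where "L = Inl ` {0..<t}" and "R = Inr ` {0..<n - t}"
  define h where "h p = \<bar>(int (deg J (fst p)))^2 - (int (deg J (snd p)))^2\<bar>" for p
  have verts_J: "verts J = L \<union> R" unfolding J_def L_def R_def by (rule verts_complete_split_graph)
  have deg_J: "deg J u = (if isl u then n - 1 else t)" if "u \<in> verts J" for u
    using deg_complete_split_graph[OF assms that[unfolded J_def]] unfolding J_def .
  have deg_L: "deg J u = n - 1" if "u \<in> L" for u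
    using that deg_J verts_J unfolding L_def by auto
  have deg_R: "deg J v = t" if "v \<in> R" for v
    using that deg_J verts_J unfolding R_def by auto
  have "{u \<in> verts J. isl u} = L" "{u \<in> verts J. \<not> isl u} = R"
    unfolding verts_J L_def R_def by auto
  moreover have "arcs J L R = L \<times> R" "arcs J R L = R \<times> L" "arcs J R R = {}"
    unfolding arcs_def J_def adj_complete_split_graph verts_complete_split_graph L_def R_def by auto
  moreover have "sum h (arcs J L L) = 0"
    by (intro sum.neutral) (auto simp: h_def arcs_def deg_L)
  moreover have "sum h (L \<times> R) = (\<Sum>p\<in>L \<times> R. \<bar>(int (n - 1))^2 - (int t)^2\<bar>)"
    by (intro sum.cong) (auto simp: h_def deg_L deg_R)
  moreover have "sum h (R \<times> L) = (\<Sum>p\<in>R \<times> L. \<bar>(int (n - 1))^2 - (int t)^2\<bar>)"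
    by (intro sum.cong) (auto simp: h_def deg_L deg_R abs_minus_commute)
  moreover have "finite L" "finite R" "finite (verts J)" unfolding verts_J L_def R_def by simp_all
  ultimately have "(\<Sum>p\<in>arcs J (verts J) (verts J). h p) =
      2 * (int (card L * card R) * \<bar>(int (n - 1))^2 - (int t)^2\<bar>)"
    using sum_arcs_partition[of "verts J" UNIV isl h J, OF _ finite_UNIV subset_UNIV]
    by (simp add: UNIV_bool card_cartesian_product mult.commute[of "card R"] mult.assoc)
  then have "cM2 J = int (card L * card R) * \<bar>(int (n - 1))^2 - (int t)^2\<bar>"
    unfolding cM2_eq_sum_arcs h_def by (simp add: case_prod_beta')
  also have "\<dots> = complete_split_cM2 n t"
  proof (cases "t = n")
    case False
    then have "(int t)^2 \<le> (int (n - 1))^2" using assms by (intro power_mono) auto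
    then show ?thesis using assms False
      by (simp add: L_def R_def card_image complete_split_cM2_def of_nat_diff)
  qed (simp add: R_def complete_split_cM2_def)
  finally show ?thesis unfolding J_def .
qed

lemma ivl_lift_Suc_mono_le:
  fixes f :: "nat \<Rightarrow> 'a::preorder"
  assumes "\<And>k. i \<le> k \<Longrightarrow> k < j \<Longrightarrow> f k \<le> f (Suc k)" and "i \<le> j"
  shows "f i \<le> f j"
proof -
  have "m \<le> j \<Longrightarrow> f i \<le> f m" if "i \<le> m" for m
    using that
  proof (induction m rule: dec_induct)
    case (step m)
    then show ?case using assms(1)[of m] order.trans by fastforce
  qed simp
  then show ?thesis using assms(2) by simp
qed

lemma ivl_lift_Suc_antimono_le:
  fixes f :: "nat \<Rightarrow> 'a::preorder"
  assumes "\<And>k. i \<le> k \<Longrightarrow> k < j \<Longrightarrow> f (Suc k) \<le> f k" and "i \<le> j"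
  shows "f j \<le> f i"
proof -
  have "m \<le> j \<Longrightarrow> f m \<le> f i" if "i \<le> m" for m
    using that
  proof (induction m rule: dec_induct)
    case (step m)
    then show ?case using assms(1)[of m] order.trans by fastforce
  qed simp
  then show ?thesis using assms(2) by simp
qed

lemma complete_split_cM2_Suc:
  "complete_split_cM2 n (Suc t) - complete_split_cM2 n t =
     - (int n - 1 - int t) * (4 * (int t)^2 + (int n + 2) * int t + 2 * int n - (int n)^2)"
  unfolding complete_split_cM2_def by (simp add: algebra_simps power2_eq_square)

lemma complete_split_cM2_le_Suc:
  assumes "11 \<le> n" and "10 * t < 3 * n"
  shows "complete_split_cM2 n t \<le> complete_split_cM2 n (Suc t)"
proof -
  have t: "10 * int t \<le> 3 * int n" using assms(2) by linarith
  have "(10 * int t) * (10 * int t) \<le> (3 * int n) * (3 * int n)"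
    using mult_mono[OF t t] by simp
  moreover have "int n * (10 * int t) \<le> int n * (3 * int n)"
    using t by (intro mult_left_mono) auto
  moreover have "11 * int n \<le> int n * int n" using assms(1) by (intro mult_right_mono) auto
  ultimately have "4 * (int t)^2 + (int n + 2) * int t + 2 * int n - (int n)^2 \<le> 0"
    using t unfolding power2_eq_square by (simp add: algebra_simps)
  moreover have "0 \<le> int n - 1 - int t" using assms by linarith
  ultimately have "(int n - 1 - int t) * (4 * (int t)^2 + (int n + 2) * int t + 2 * int n - (int n)^2) \<le> 0"
    by (intro mult_nonneg_nonpos)
  then show ?thesis using complete_split_cM2_Suc[of n t] by linarith
qed

lemma complete_split_cM2_Suc_le:
  assumes "11 \<le> n" and "2 * n \<le> 5 * t + 4" and "t < n"
  shows "complete_split_cM2 n (Suc t) \<le> complete_split_cM2 n t"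
proof -
  \<comment> \<open>Substitute \<open>5 t = 2 n - 4 + u\<close>: the constant term \<open>(n - 2) (n - 12)\<close> is negative only for
    \<open>n = 11\<close>, where integrality of \<open>t\<close> forces \<open>u \<ge> 2\<close>.\<close>
  define u where "u = 5 * int t + 4 - 2 * int n"
  have "25 * (4 * (int t)^2 + (int n + 2) * int t + 2 * int n - (int n)^2) =
        (int n - 2) * (int n - 12) + u * (21 * int n - 22 + 4 * u)"
    unfolding u_def by (simp add: algebra_simps power2_eq_square)
  moreover have "0 \<le> (int n - 2) * (int n - 12) + u * (21 * int n - 22 + 4 * u)"
  proof (cases "n = 11")
    case True
    then have "4 \<le> t" using assms(2) by linarith
    then have "2 \<le> u" using True unfolding u_def by linarith
    then have "2 * 217 \<le> u * (21 * int n - 22 + 4 * u)"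
      using True by (intro mult_mono) auto
    then show ?thesis using True by simp
  next
    case False
    then have "0 \<le> (int n - 2) * (int n - 12)" using assms(1) by simp
    moreover have "0 \<le> u" using assms(2) unfolding u_def by simp
    ultimately show ?thesis using assms(1) by simp
  qed
  ultimately have "0 \<le> 4 * (int t)^2 + (int n + 2) * int t + 2 * int n - (int n)^2" by simp
  moreover have "0 \<le> int n - 1 - int t" using assms by linarith
  ultimately have "0 \<le> (int n - 1 - int t) * (4 * (int t)^2 + (int n + 2) * int t + 2 * int n - (int n)^2)"
    by (intro mult_nonneg_nonneg)
  then show ?thesis using complete_split_cM2_Suc[of n t] by linarith
qed

lemma complete_split_cM2_le_in_range:
  assumes "11 \<le> n" and "t' \<le> n"
  shows "\<exists>t. 3 * n \<le> 10 * t \<and> 10 * t \<le> 4 * n \<and>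
             complete_split_cM2 n t' \<le> complete_split_cM2 n t"
proof -
  consider "10 * t' < 3 * n" | "4 * n < 10 * t'" | "3 * n \<le> 10 * t' \<and> 10 * t' \<le> 4 * n"
    by linarith
  then show ?thesis
  proof cases
    case 1
    define t where "t = (3 * n + 9) div 10"
    have "3 * n + 9 = 10 * t + (3 * n + 9) mod 10" unfolding t_def by simp
    moreover have "(3 * n + 9) mod 10 < 10" by simp
    ultimately have t: "3 * n \<le> 10 * t" "10 * t \<le> 3 * n + 9" by linarith+
    have "complete_split_cM2 n t' \<le> complete_split_cM2 n t"
    proof (rule ivl_lift_Suc_mono_le)
      show "complete_split_cM2 n k \<le> complete_split_cM2 n (Suc k)" if "t' \<le> k" "k < t" for k
        using that t by (intro complete_split_cM2_le_Suc[OF assms(1)]) linarith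
    qed (use 1 t in linarith)
    with t assms(1) show ?thesis by (intro exI[of _ t]) auto
  next
    case 2
    define t where "t = 2 * n div 5"
    have "2 * n = 5 * t + 2 * n mod 5" unfolding t_def by simp
    moreover have "2 * n mod 5 < 5" by simp
    ultimately have t: "2 * n \<le> 5 * t + 4" "5 * t \<le> 2 * n" by linarith+
    have "complete_split_cM2 n t' \<le> complete_split_cM2 n t"
    proof (rule ivl_lift_Suc_antimono_le)
      show "complete_split_cM2 n (Suc k) \<le> complete_split_cM2 n k" if "t \<le> k" "k < t'" for k
        using that t assms(2) by (intro complete_split_cM2_Suc_le[OF assms(1)]) linarith+
    qed (use 2 t in linarith)
    with t assms(1) show ?thesis by (intro exI[of _ t]) auto
  qed auto
qed

lemma adj_dominating_vertex:
  assumes "simple_graph G" and "v \<in> verts G" and "deg G v = card (verts G) - 1"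
    and "u \<in> verts G" and "u \<noteq> v"
  shows "adj G u v"
proof -
  have fin: "finite (verts G)" using assms(1) unfolding simple_graph_def by simp
  have sub: "{w \<in> verts G. adj G v w} \<subseteq> verts G - {v}"
    using assms(1) unfolding simple_graph_def by auto
  have "card {w \<in> verts G. adj G v w} = card (verts G - {v})"
    using assms(2,3) fin by (simp add: deg_def)
  then have "{w \<in> verts G. adj G v w} = verts G - {v}"
    using card_subset_eq[OF _ sub] fin by simp
  then have "adj G v u" using assms(4,5) by auto
  then show ?thesis using assms(1) unfolding simple_graph_def by blast
qed

lemma card_neighbours_add_le_deg:
  assumes "simple_graph G" and "Z \<subseteq> verts G" and "Y \<inter> Z = {}" and "\<And>z. z \<in> Z \<Longrightarrow> adj G u z"
  shows "card {v \<in> Y. adj G u v} + card Z \<le> deg G u"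
proof -
  have fin: "finite (verts G)" using assms(1) unfolding simple_graph_def by simp
  have "{v \<in> Y. adj G u v} \<subseteq> verts G" using assms(1) unfolding simple_graph_def by auto
  then have "{v \<in> Y. adj G u v} \<union> Z \<subseteq> {v \<in> verts G. adj G u v}" using assms(2,4) by auto
  then have "card ({v \<in> Y. adj G u v} \<union> Z) \<le> deg G u"
    unfolding deg_def using fin by (intro card_mono) auto
  moreover have "finite {v \<in> Y. adj G u v}"
    using \<open>{v \<in> Y. adj G u v} \<subseteq> verts G\<close> fin finite_subset by blast
  ultimately show ?thesis
    using assms(2,3) fin finite_subset by (subst (asm) card_Un_disjoint) auto
qed

lemma card_arcs_le_mult_deg_diff:
  assumes "simple_graph G" and "X \<subseteq> verts G" and "Z \<subseteq> verts G" and "Y \<inter> Z = {}"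
    and "\<And>u. u \<in> X \<Longrightarrow> deg G u = d" and "\<And>u z. u \<in> X \<Longrightarrow> z \<in> Z \<Longrightarrow> adj G u z"
  shows "card (arcs G X Y) \<le> card X * (d - card Z)"
proof -
  have fin: "finite (verts G)" using assms(1) unfolding simple_graph_def by simp
  have "finite {v \<in> Y. adj G u v}" for u
    by (rule finite_subset[OF _ fin]) (use assms(1) in \<open>auto simp: simple_graph_def\<close>)
  moreover have "finite X" using finite_subset[OF assms(2) fin] .
  moreover have "arcs G X Y = (SIGMA u:X. {v \<in> Y. adj G u v})" unfolding arcs_def by auto
  ultimately have "card (arcs G X Y) = (\<Sum>u\<in>X. card {v \<in> Y. adj G u v})" by simp
  also have "\<dots> \<le> (\<Sum>u\<in>X. d - card Z)"
  proof (rule sum_mono)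
    fix u assume "u \<in> X"
    then have "card {v \<in> Y. adj G u v} + card Z \<le> d"
      using card_neighbours_add_le_deg[OF assms(1,3,4), of u] assms(5,6) by simp
    then show "card {v \<in> Y. adj G u v} \<le> d - card Z" by linarith
  qed
  finally show ?thesis by simp
qed

definition three_class_cM2 :: "nat \<Rightarrow> nat \<Rightarrow> nat \<Rightarrow> nat \<Rightarrow> nat \<Rightarrow> nat \<Rightarrow> nat \<Rightarrow> int" where
  "three_class_cM2 d1 d2 d3 s n1 n2 e = int s * int n1 * ((int d3)^2 - (int d1)^2)
     + int s * int n2 * ((int d3)^2 - (int d2)^2) + int e * ((int d2)^2 - (int d1)^2)"

lemma cM2_three_degree_classes:
  fixes G :: "'a graph" and d1 d2 d3 :: nat
  defines "V1 \<equiv> degree_class G d1" and "V2 \<equiv> degree_class G d2" and "V3 \<equiv> degree_class G d3"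
  assumes "simple_graph G" and "degree_set G = {d1, d2, d3}" and "d1 < d2" and "d2 < d3"
    and "d3 = card (verts G) - 1"
  shows "cM2 G = three_class_cM2 d1 d2 d3 (card V3) (card V1) (card V2) (card (arcs G V1 V2))"
proof -
  have fin: "finite (verts G)" using assms(4) unfolding simple_graph_def by simp
  then have "finite V1" "finite V2" "finite V3"
    unfolding V1_def V2_def V3_def degree_class_def by simp_all
  have arcs_to_V3: "arcs G X V3 = X \<times> V3" if "X \<subseteq> verts G" "X \<inter> V3 = {}" for X
    using that adj_dominating_vertex[OF assms(4)] assms(8)
    unfolding arcs_def V3_def degree_class_def by fastforce
  have "arcs G V1 V3 = V1 \<times> V3" "arcs G V2 V3 = V2 \<times> V3"
    using assms(6,7) by (intro arcs_to_V3; force simp: V1_def V2_def V3_def degree_class_def)+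
  then have card_arcs:
    "card (arcs G V1 V3) = card V3 * card V1" "card (arcs G V3 V1) = card V3 * card V1"
    "card (arcs G V2 V3) = card V3 * card V2" "card (arcs G V3 V2) = card V3 * card V2"
    "card (arcs G V2 V1) = card (arcs G V1 V2)"
    using card_arcs_commute[OF assms(4)] by (simp_all add: card_cartesian_product)
  have abs_sq: "\<bar>(int y)^2 - (int x)^2\<bar> = (int y)^2 - (int x)^2"
      "\<bar>(int x)^2 - (int y)^2\<bar> = (int y)^2 - (int x)^2" if "x \<le> y" for x y :: nat
    using power_mono[of "int x" "int y" 2] that by simp_all
  have "cM2 G = (\<Sum>i\<in>{d1, d2, d3}. \<Sum>j\<in>{d1, d2, d3}.
    int (card (arcs G (degree_class G i) (degree_class G j))) * \<bar>(int i)^2 - (int j)^2\<bar>) div 2"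
    using cM2_by_degree_classes[OF fin] assms(5) by simp
  also have "\<dots> = (2 * three_class_cM2 d1 d2 d3 (card V3) (card V1) (card V2) (card (arcs G V1 V2))) div 2"
    using assms(6,7) by (simp add: V1_def[symmetric] V2_def[symmetric] V3_def[symmetric]
        card_arcs abs_sq three_class_cM2_def algebra_simps)
  finally show ?thesis by simp
qed

lemma mult_gap_le_complete_split_cM2:
  assumes "x \<le> int T * (int n - int T)" and "T \<le> d" and "d < n"
  shows "x * ((int n - 1)^2 - (int d)^2) \<le> complete_split_cM2 n T"
proof -
  have "(int d)^2 \<le> (int n - 1)^2" using assms(3) by (intro power_mono) auto
  then have "x * ((int n - 1)^2 - (int d)^2) \<le> int T * (int n - int T) * ((int n - 1)^2 - (int d)^2)"
    using assms(1) by (intro mult_right_mono) auto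
  also have "\<dots> \<le> int T * (int n - int T) * ((int n - 1)^2 - (int T)^2)"
    using assms by (intro mult_left_mono power_mono) auto
  finally show ?thesis unfolding complete_split_cM2_def .
qed

lemma mult_gap_less_complete_split_cM2:
  assumes "0 < x" and "x \<le> int T * (int n - int T)" and "T < d" and "d < n"
  shows "x * ((int n - 1)^2 - (int d)^2) < complete_split_cM2 n T"
proof -
  have "(int T)^2 < (int d)^2" using assms(3) by (intro power_strict_mono) auto
  then have "x * ((int n - 1)^2 - (int d)^2) < x * ((int n - 1)^2 - (int T)^2)"
    using assms(1) by (intro mult_strict_left_mono) auto
  also have "\<dots> \<le> complete_split_cM2 n T"
    using mult_gap_le_complete_split_cM2[OF assms(2)] assms(3,4) by simp
  finally show ?thesis .
qed

lemma three_class_cM2_less_at_dominating_count: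
  assumes "n = s + n1 + n2" and "1 \<le> s" and "1 \<le> n2" and "s \<le> d1" and "d1 < d2"
    and "d2 < n - 1" and "e \<le> n1 * (d1 - s)" and "e \<le> s * n2"
  shows "three_class_cM2 d1 d2 (n - 1) s n1 n2 e < complete_split_cM2 n s"
proof -
  have "(int d1)^2 < (int d2)^2" using assms(5) by (intro power_strict_mono) auto
  have "int (n - 1) = int n - 1" using assms(1,2) by simp
  then have tot: "three_class_cM2 d1 d2 (n - 1) s n1 n2 e =
      int s * (int n - int s) * ((int n - 1)^2 - (int d1)^2)
      - (int s * int n2 - int e) * ((int d2)^2 - (int d1)^2)"
    unfolding three_class_cM2_def using assms(1) by (simp add: algebra_simps)
  show ?thesis
  proof (cases "e = s * n2")
    case True
    then have "0 < e" using assms(2,3) by (simp add: Suc_le_eq)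
    then have "s < d1" using assms(7) by (cases "s < d1") auto
    then have "int s * (int n - int s) * ((int n - 1)^2 - (int d1)^2) < complete_split_cM2 n s"
      using assms by (intro mult_gap_less_complete_split_cM2) auto
    then show ?thesis unfolding tot using True by simp
  next
    case False
    then have "0 < (int s * int n2 - int e) * ((int d2)^2 - (int d1)^2)"
      using assms(8) \<open>(int d1)^2 < (int d2)^2\<close> by (simp flip: of_nat_mult)
    moreover have "int s * (int n - int s) * ((int n - 1)^2 - (int d1)^2) \<le> complete_split_cM2 n s"
      using assms by (intro mult_gap_le_complete_split_cM2) auto
    ultimately show ?thesis unfolding tot by linarith
  qed
qed

lemma three_class_cM2_less_at_min:
  assumes "n = s + n1 + n2" and "s \<le> d1" and "d1 < d2" and "d2 < n - 1"
    and "e \<le> n1 * n2" and "e \<le> n1 * (d1 - s)" and "s * n2 < e"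
  shows "three_class_cM2 d1 d2 (n - 1) s n1 n2 e < complete_split_cM2 n (min d1 (s + n2))"
proof -
  define T where "T = min d1 (s + n2)"
  have "T \<le> d1" and "T \<le> s + n2" unfolding T_def by simp_all
  have "n1 * s \<le> n1 * d1" using assms(2) by (rule mult_left_mono) simp
  moreover have "e \<le> n1 * d1 - n1 * s" using assms(6) by (simp add: right_diff_distrib')
  ultimately have "n1 * s + e \<le> n1 * d1" by linarith
  moreover have "n1 * s + e \<le> n1 * (s + n2)" using assms(5) by (simp add: algebra_simps)
  ultimately have "n1 * s + e \<le> n1 * T" unfolding T_def by (simp add: min_def)
  also have "\<dots> \<le> (n - T) * T" using \<open>T \<le> s + n2\<close> assms(1) by (intro mult_right_mono) auto
  finally have "int (n1 * s + e) \<le> int ((n - T) * T)" by (rule of_nat_mono)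
  moreover have "T \<le> n" using \<open>T \<le> s + n2\<close> assms(1) by simp
  ultimately have T: "int s * int n1 + int e \<le> int T * (int n - int T)"
    by (simp add: of_nat_diff mult.commute)
  have "(int d2)^2 < (int n - 1)^2" using assms(4) by (intro power_strict_mono) auto
  then have "0 < (int e - int s * int n2) * ((int n - 1)^2 - (int d2)^2)"
    using assms(7) by (simp flip: of_nat_mult)
  moreover have "int (n - 1) = int n - 1" using assms(4) by simp
  then have "three_class_cM2 d1 d2 (n - 1) s n1 n2 e =
      (int s * int n1 + int e) * ((int n - 1)^2 - (int d1)^2)
      - (int e - int s * int n2) * ((int n - 1)^2 - (int d2)^2)"
    unfolding three_class_cM2_def by (simp add: algebra_simps)
  moreover have "(int s * int n1 + int e) * ((int n - 1)^2 - (int d1)^2) \<le> complete_split_cM2 n T"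
    using T \<open>T \<le> d1\<close> assms(3,4) by (intro mult_gap_le_complete_split_cM2) auto
  ultimately show ?thesis unfolding T_def by linarith
qed

lemma three_class_cM2_less_complete_split_cM2:
  assumes "n = s + n1 + n2" and "1 \<le> s" and "1 \<le> n2" and "s \<le> d1" and "d1 < d2"
    and "d2 < n - 1" and "e \<le> n1 * n2" and "e \<le> n1 * (d1 - s)"
  shows "\<exists>t \<le> n - 1. three_class_cM2 d1 d2 (n - 1) s n1 n2 e < complete_split_cM2 n t"
proof (cases "e \<le> s * n2")
  case True
  then show ?thesis using assms three_class_cM2_less_at_dominating_count[OF assms(1-6,8)]
    by (intro exI[of _ s]) auto
next
  case False
  then show ?thesis using assms three_class_cM2_less_at_min[OF assms(1,4-8)]
    by (intro exI[of _ "min d1 (s + n2)"]) auto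
qed

lemma cM2_lt_complete_split_cM2:
  fixes G :: "'a graph"
  assumes "simple_graph G" and "card (verts G) = n" and "degree_set G = {d1, d2, d3}"
    and "d1 < d2" and "d2 < d3" and "d3 = n - 1"
  shows "\<exists>t \<le> n - 1. cM2 G < complete_split_cM2 n t"
proof -
  define V1 V2 V3 where "V1 = degree_class G d1" and "V2 = degree_class G d2"
    and "V3 = degree_class G d3"
  have fin: "finite (verts G)" using assms(1) unfolding simple_graph_def by simp
  have sub: "V1 \<subseteq> verts G" "V2 \<subseteq> verts G" "V3 \<subseteq> verts G"
    unfolding V1_def V2_def V3_def degree_class_def by auto
  have finV: "finite V1" "finite V2" "finite V3" using sub fin by (auto intro: finite_subset)
  have "V1 \<noteq> {}" "V2 \<noteq> {}" "V3 \<noteq> {}"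
    using assms(3) unfolding V1_def V2_def V3_def degree_class_def degree_set_def by force+
  then have "1 \<le> card V2" "1 \<le> card V3" using finV by (simp_all add: Suc_le_eq card_gt_0_iff)
  have disj: "V1 \<inter> V2 = {}" "V1 \<inter> V3 = {}" "V2 \<inter> V3 = {}"
    using assms(4,5) unfolding V1_def V2_def V3_def degree_class_def by auto
  have "verts G = V1 \<union> V2 \<union> V3"
    using assms(3) unfolding V1_def V2_def V3_def degree_class_def degree_set_def by auto
  then have n: "n = card V3 + card V1 + card V2"
    using assms(2) finV disj by (simp add: card_Un_disjoint Int_Un_distrib2)
  have to_V3: "adj G u z" if "u \<in> V1" "z \<in> V3" for u z
    using that disj(2) sub adj_dominating_vertex[OF assms(1)] assms(2,6)
    unfolding V3_def degree_class_def by blast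
  have deg_V1: "deg G u = d1" if "u \<in> V1" for u using that unfolding V1_def degree_class_def by simp
  obtain u where "u \<in> V1" using \<open>V1 \<noteq> {}\<close> by blast
  then have "card V3 \<le> d1"
    using card_neighbours_add_le_deg[OF assms(1) sub(3), of "{}" u] to_V3 deg_V1 by simp
  have "card (arcs G V1 V2) \<le> card V1 * card V2" using finV(1,2) by (rule card_arcs_le)
  moreover have "card (arcs G V1 V2) \<le> card V1 * (d1 - card V3)"
    using assms(1) sub(1,3) disj(3) deg_V1 to_V3 by (rule card_arcs_le_mult_deg_diff)
  moreover have "d2 < n - 1" using assms(5,6) by simp
  ultimately obtain t where "t \<le> n - 1"
    and "three_class_cM2 d1 d2 (n - 1) (card V3) (card V1) (card V2) (card (arcs G V1 V2))
      < complete_split_cM2 n t"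
    using three_class_cM2_less_complete_split_cM2[OF n] \<open>1 \<le> card V2\<close> \<open>1 \<le> card V3\<close>
      \<open>card V3 \<le> d1\<close> assms(4) by blast
  then show ?thesis
    using cM2_three_degree_classes[OF assms(1,3-5)] assms(2,6) unfolding V1_def V2_def V3_def by auto
qed

theorem proposition5:
  fixes G :: "'a graph" and n d1 d2 d3 :: nat
  assumes "n \<ge> 11"
    and "simple_graph G" and "connected_graph G"
    and "card (verts G) = n"
    and "tridegreed G"
    and "degree_set G = {d1, d2, d3}"
    and "d1 < d2" and "d2 < d3" and "d3 = n - 1"
  shows "\<exists>t::nat. 3 * n \<le> 10 * t \<and> 10 * t \<le> 4 * n \<and>
           cM2 G < cM2 (join (complete_graph t) (complement (complete_graph (n - t))))"
proof -
  obtain t' where "t' \<le> n - 1" and "cM2 G < complete_split_cM2 n t'"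
    using cM2_lt_complete_split_cM2[OF assms(2,4,6-9)] by blast
  moreover obtain t where "3 * n \<le> 10 * t" and "10 * t \<le> 4 * n"
    and "complete_split_cM2 n t' \<le> complete_split_cM2 n t"
    using complete_split_cM2_le_in_range[OF assms(1)] \<open>t' \<le> n - 1\<close> by (meson diff_le_self le_trans)
  moreover have "t \<le> n" using \<open>10 * t \<le> 4 * n\<close> by linarith
  ultimately show ?thesis
    using cM2_complete_split_graph[unfolded complete_split_graph_def] by (intro exI[of _ t]) auto
qed

end
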